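(* Let $A$ be a separable algebraically simple $C^*$-algebra with non-empty compact $T(A)$. Suppose that $F_1\subset F_2\subset\partial_e(T(A))$ are compact subsets such that for all $x\in l^\infty(A)/I_{T(A),\varpi}$, $$\|\pi_{F_1}(x)\|_{2,{F_1}_\varpi}=\inf\{\|\pi_{F_2}(x)+j\|_{2,{F_2}_\varpi}: j\in I_{F_1,\varpi}/I_{F_2,\varpi}\}\quad\text{and}\quad\|\pi_{F_2}(x)\|_{2,{F_2}_\varpi}=\inf\{\|x+k\|_{2,T(A)_\varpi}:k\in I_{F_2,\varpi}/I_{T(A),\varpi}\},$$ where $\pi_{F_i}:l^\infty(A)/I_{T(A),\varpi}\to l^\infty(A)/I_{F_i,\varpi}$ are the quotient maps. Then for all $x\in l^\infty(A)/I_{T(A),\varpi}$, $$\|\pi_{F_1}(x)\|_{2,{F_1}_\varpi}=\inf\{\|x+b\|_{2,T(A)_\varpi}: b\in I_{F_1,\varpi}/I_{T(A),\varpi}\}.$$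
   Context: Algebraically simple: simple and $A={\rm Ped}(A)$. Fix a free ultrafilter $\varpi$ on $\mathbb N$. For a set $S$ of traces, $\|a\|_{2,S}=\sup_{\tau\in S}\tau(a^*a)^{1/2}$, $I_{S,\varpi}=\{(a_n)\in l^\infty(A):\lim_{n\to\varpi}\|a_n\|_{2,S}=0\}$ and $\|(a_n)+I_{S,\varpi}\|_{2,S_\varpi}=\lim_{n\to\varpi}\|a_n\|_{2,S}$. *)

theory Defs
  imports "HOL-Analysis.Analysis"
begin

text \<open>A (possibly non-unital) C*-algebra on the type 'a: a real Banach algebra together with
  a complex scalar multiplication cs extending the real one, and an involution st satisfying the
  C*-identity.\<close>
definition cstar_algebra :: "(complex \<Rightarrow> 'a::{real_normed_algebra,banach} \<Rightarrow> 'a) \<Rightarrow> ('a \<Rightarrow> 'a) \<Rightarrow> bool" where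
  "cstar_algebra cs st \<longleftrightarrow>
     (\<forall>r x. cs (complex_of_real r) x = r *\<^sub>R x) \<and>
     (\<forall>c x y. cs c (x + y) = cs c x + cs c y) \<and>
     (\<forall>c d x. cs (c + d) x = cs c x + cs d x) \<and>
     (\<forall>c d x. cs (c * d) x = cs c (cs d x)) \<and>
     (\<forall>c x y. cs c (x * y) = cs c x * y \<and> cs c (x * y) = x * cs c y) \<and>
     (\<forall>c x. norm (cs c x) = cmod c * norm x) \<and>
     (\<forall>x. st (st x) = x) \<and>
     (\<forall>x y. st (x + y) = st x + st y) \<and>
     (\<forall>c x. st (cs c x) = cs (cnj c) (st x)) \<and>
     (\<forall>x y. st (x * y) = st y * st x) \<and>
     (\<forall>x. norm (st x * x) = (norm x)\<^sup>2)"

definition cideal :: "(complex \<Rightarrow> 'a::{real_normed_algebra,banach} \<Rightarrow> 'a) \<Rightarrow> 'a set \<Rightarrow> bool" where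
  "cideal cs I \<longleftrightarrow> 0 \<in> I \<and> (\<forall>x\<in>I. \<forall>y\<in>I. x + y \<in> I) \<and> (\<forall>c. \<forall>x\<in>I. cs c x \<in> I) \<and>
     (\<forall>x\<in>I. \<forall>a. a * x \<in> I \<and> x * a \<in> I)"

definition simple_calg :: "(complex \<Rightarrow> 'a::{real_normed_algebra,banach} \<Rightarrow> 'a) \<Rightarrow> bool" where
  "simple_calg cs \<longleftrightarrow> (UNIV :: 'a set) \<noteq> {0} \<and>
     (\<forall>I. cideal cs I \<and> closed I \<longrightarrow> I = {0} \<or> I = UNIV)"

definition pedersen_ideal :: "(complex \<Rightarrow> 'a::{real_normed_algebra,banach} \<Rightarrow> 'a) \<Rightarrow> 'a set" where
  "pedersen_ideal cs = \<Inter>{I. cideal cs I \<and> closure I = UNIV}"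

definition algebraically_simple :: "(complex \<Rightarrow> 'a::{real_normed_algebra,banach} \<Rightarrow> 'a) \<Rightarrow> bool" where
  "algebraically_simple cs \<longleftrightarrow> simple_calg cs \<and> pedersen_ideal cs = UNIV"

definition separable_space :: "'a::metric_space itself \<Rightarrow> bool" where
  "separable_space _ \<longleftrightarrow> (\<exists>D::'a set. countable D \<and> closure D = UNIV)"

definition tracial_states ::
  "(complex \<Rightarrow> 'a::{real_normed_algebra,banach} \<Rightarrow> 'a) \<Rightarrow> ('a \<Rightarrow> 'a) \<Rightarrow> ('a \<Rightarrow> complex) set" where
  "tracial_states cs st = {\<tau>. bounded_linear \<tau> \<and> (\<forall>c x. \<tau> (cs c x) = c * \<tau> x) \<and>
       (\<forall>x. Im (\<tau> (st x * x)) = 0 \<and> Re (\<tau> (st x * x)) \<ge> 0) \<and>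
       (\<forall>x. \<tau> (st x * x) = \<tau> (x * st x)) \<and>
       onorm \<tau> = 1}"

definition extreme_boundary :: "('a \<Rightarrow> complex) set \<Rightarrow> ('a \<Rightarrow> complex) set" where
  "extreme_boundary S = {\<tau>\<in>S. \<forall>\<sigma>\<in>S. \<forall>\<rho>\<in>S. \<forall>t::real. 0 < t \<and> t < 1 \<and>
       (\<forall>a. \<tau> a = complex_of_real t * \<sigma> a + complex_of_real (1 - t) * \<rho> a) \<longrightarrow> \<sigma> = \<rho>}"

definition free_ultrafilter :: "nat filter \<Rightarrow> bool" where
  "free_ultrafilter F \<longleftrightarrow> F \<noteq> bot \<and> (\<forall>P. eventually P F \<or> eventually (\<lambda>n. \<not> P n) F) \<and>
     F \<le> cofinite"

definition norm2 :: "('a::{real_normed_algebra,banach} \<Rightarrow> 'a) \<Rightarrow> ('a \<Rightarrow> complex) set \<Rightarrow> 'a \<Rightarrow> real" where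
  "norm2 st S a = Sup ({0} \<union> (\<lambda>\<tau>. sqrt (Re (\<tau> (st a * a)))) ` S)"

definition linfty :: "(nat \<Rightarrow> 'a::real_normed_vector) set" where
  "linfty = {a. bounded (range a)}"

text \<open>The seminorm on l^infty(A) inducing the norm of l^infty(A)/I_{S,varpi}:
  lim_{n -> varpi} ||a_n||_{2,S}.\<close>
definition unorm2 :: "nat filter \<Rightarrow> ('a::{real_normed_algebra,banach} \<Rightarrow> 'a) \<Rightarrow> ('a \<Rightarrow> complex) set \<Rightarrow> (nat \<Rightarrow> 'a) \<Rightarrow> real" where
  "unorm2 F st S a = Lim F (\<lambda>n. norm2 st S (a n))"

definition I_ideal :: "nat filter \<Rightarrow> ('a::{real_normed_algebra,banach} \<Rightarrow> 'a) \<Rightarrow> ('a \<Rightarrow> complex) set \<Rightarrow> (nat \<Rightarrow> 'a) set" where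
  "I_ideal F st S = {a \<in> linfty. unorm2 F st S a = 0}"

end

theory Submission
  imports Defs "HOL-Library.Function_Algebras"
begin

text \<open>Only the quotient structure matters.  Write p, q, r for the seminorms along F1, F2 and
  T(A); the hypotheses say that p is the quotient seminorm of q modulo I_F1 and q that of r modulo
  I_F2.  For j \<in> I_F1 we get p(x) \<le> q(x + j) \<le> r(x + j).  Conversely
  inf_j r(x + j) \<le> inf_j inf_k r(x + j + k) = inf_j q(x + j) = p(x), which uses
  I_F1 + I_F2 \<subseteq> I_F1: for j \<in> I_F1 and k \<in> I_F2 the first hypothesis gives
  p(j + k) \<le> q((j + k) - j) = q(k) = 0.\<close>

lemma quotient_seminorm_trans:
  fixes p q r :: "'v::ab_group_add \<Rightarrow> real"
  assumes V_add: "\<And>x y. x \<in> V \<Longrightarrow> y \<in> V \<Longrightarrow> x + y \<in> V"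
    and q_nonneg: "\<And>x. x \<in> V \<Longrightarrow> 0 \<le> q x"
    and r_nonneg: "\<And>x. x \<in> V \<Longrightarrow> 0 \<le> r x"
    and I_eq: "I = {x \<in> V. p x = 0}" and J_eq: "J = {x \<in> V. q x = 0}"
    and "0 \<in> I" "0 \<in> J"
    and I_uminus: "\<And>j. j \<in> I \<Longrightarrow> - j \<in> I"
    and p_quotient: "\<forall>x\<in>V. p x = (INF j\<in>I. q (x + j))"
    and q_quotient: "\<forall>x\<in>V. q x = (INF k\<in>J. r (x + k))"
  shows "\<forall>x\<in>V. p x = (INF j\<in>I. r (x + j))"
proof
  have IV: "I \<subseteq> V" and JV: "J \<subseteq> V" using I_eq J_eq by auto
  have bdd: "bdd_below ((\<lambda>j. f (x + j)) ` A)"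
    if "\<And>y. y \<in> V \<Longrightarrow> 0 \<le> f y" "x \<in> V" "A \<subseteq> V" for f :: "'v \<Rightarrow> real" and x A
    using that V_add by (intro bdd_belowI[of _ 0]) blast
  have p_nonneg: "0 \<le> p x" if "x \<in> V" for x
    using p_quotient that \<open>0 \<in> I\<close> IV q_nonneg V_add by (auto intro!: cINF_greatest)
  have I_add_J: "j + k \<in> I" if j: "j \<in> I" and k: "k \<in> J" for j k
  proof -
    have jk: "j + k \<in> V" using j k IV JV V_add by blast
    have "p (j + k) \<le> q ((j + k) + - j)"
      using p_quotient jk cINF_lower[OF bdd[OF q_nonneg jk IV] I_uminus[OF j]] by simp
    also have "\<dots> = 0" using k J_eq by simp
    finally show ?thesis using p_nonneg[OF jk] jk I_eq by simp
  qed
  fix x assume x: "x \<in> V"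
  show "p x = (INF j\<in>I. r (x + j))"
  proof (rule antisym)
    show "p x \<le> (INF j\<in>I. r (x + j))"
    proof (rule cINF_greatest)
      fix j assume j: "j \<in> I"
      have xj: "x + j \<in> V" using x j IV V_add by blast
      have "p x \<le> q (x + j)"
        using p_quotient x cINF_lower[OF bdd[OF q_nonneg x IV] j] by simp
      also have "\<dots> \<le> r (x + j + 0)"
        using q_quotient xj cINF_lower[OF bdd[OF r_nonneg xj JV] \<open>0 \<in> J\<close>] by simp
      finally show "p x \<le> r (x + j)" by simp
    qed (use \<open>0 \<in> I\<close> in blast)
  next
    have "(INF b\<in>I. r (x + b)) \<le> q (x + j)" if j: "j \<in> I" for j
    proof -
      have xj: "x + j \<in> V" using x j IV V_add by blast
      have "(INF b\<in>I. r (x + b)) \<le> r (x + j + k)" if k: "k \<in> J" for k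
        using cINF_lower[OF bdd[OF r_nonneg x IV] I_add_J[OF j k]] by (simp add: add.assoc)
      then have "(INF b\<in>I. r (x + b)) \<le> (INF k\<in>J. r (x + j + k))"
        using \<open>0 \<in> J\<close> by (blast intro: cINF_greatest)
      then show ?thesis using q_quotient xj by simp
    qed
    then have "(INF b\<in>I. r (x + b)) \<le> (INF j\<in>I. q (x + j))"
      using \<open>0 \<in> I\<close> by (blast intro: cINF_greatest)
    then show "(INF j\<in>I. r (x + j)) \<le> p x" using p_quotient x by simp
  qed
qed

lemma ultrafilter_tendsto_in_compact:
  fixes f :: "'b \<Rightarrow> 'a::topological_space"
  assumes "compact K" and "F \<noteq> bot"
    and ultra: "\<forall>P. eventually P F \<or> eventually (\<lambda>n. \<not> P n) F"
    and "eventually (\<lambda>n. f n \<in> K) F"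
  shows "\<exists>L\<in>K. (f \<longlongrightarrow> L) F"
proof -
  have "filtermap f F \<noteq> bot" using \<open>F \<noteq> bot\<close> by (simp add: filtermap_bot_iff)
  moreover have "eventually (\<lambda>y. y \<in> K) (filtermap f F)"
    using assms(4) by (simp add: eventually_filtermap)
  ultimately obtain L where L: "L \<in> K" "inf (nhds L) (filtermap f F) \<noteq> bot"
    using \<open>compact K\<close> unfolding compact_filter by blast
  have "(f \<longlongrightarrow> L) F"
  proof (rule topological_tendstoI)
    fix U assume U: "open U" "L \<in> U"
    show "eventually (\<lambda>n. f n \<in> U) F"
    proof (rule ccontr)
      assume "\<not> eventually (\<lambda>n. f n \<in> U) F"
      then have "eventually (\<lambda>y. y \<notin> U) (filtermap f F)"
        using ultra by (simp add: eventually_filtermap) blast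
      moreover have "eventually (\<lambda>y. y \<in> U) (nhds L)" using U by (rule eventually_nhds_in_open)
      ultimately have "eventually (\<lambda>_. False) (inf (nhds L) (filtermap f F))"
        unfolding eventually_inf by blast
      then show False using L(2) by (simp add: eventually_False)
    qed
  qed
  then show ?thesis using L by blast
qed

lemma norm2_bounds:
  assumes "cstar_algebra cs st" and S: "S \<subseteq> tracial_states cs st"
  shows "0 \<le> norm2 st S a \<and> norm2 st S a \<le> norm a"
proof -
  have le_norm: "sqrt (Re (\<tau> (st a * a))) \<le> norm a" if "\<tau> \<in> S" for \<tau>
  proof -
    have \<tau>: "bounded_linear \<tau>" "onorm \<tau> = 1" using that S unfolding tracial_states_def by auto
    have "Re (\<tau> (st a * a)) \<le> cmod (\<tau> (st a * a))" by (rule complex_Re_le_cmod)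
    also have "\<dots> \<le> onorm \<tau> * norm (st a * a)" by (rule onorm[OF \<tau>(1)])
    also have "\<dots> = (norm a)\<^sup>2" using \<tau>(2) assms(1) unfolding cstar_algebra_def by simp
    finally show ?thesis by (simp add: real_le_lsqrt)
  qed
  let ?A = "{0} \<union> (\<lambda>\<tau>. sqrt (Re (\<tau> (st a * a)))) ` S"
  have "bdd_above ?A" using le_norm by (intro bdd_aboveI[of _ "norm a"]) auto
  then have "0 \<le> Sup ?A" by (intro cSup_upper) auto
  moreover have "Sup ?A \<le> norm a" by (rule cSup_least) (auto intro: le_norm)
  ultimately show ?thesis unfolding norm2_def by simp
qed

lemma norm2_uminus:
  assumes "cstar_algebra cs st"
  shows "norm2 st S (- a) = norm2 st S a"
proof -
  have add: "st (x + y) = st x + st y" for x y using assms unfolding cstar_algebra_def by blast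
  have "st 0 = 0" using add[of 0 0] by simp
  then have "st (- a) = - st a" using add[of a "- a"] by (simp add: minus_unique)
  then show ?thesis unfolding norm2_def by simp
qed

lemma linfty_add: "x \<in> linfty \<Longrightarrow> y \<in> linfty \<Longrightarrow> x + y \<in> linfty"
  unfolding linfty_def plus_fun_def by (auto dest: bounded_plus_comp)

lemma linfty_uminus: "x \<in> linfty \<Longrightarrow> - x \<in> linfty"
  unfolding linfty_def bounded_iff by auto

lemma unorm2_nonneg:
  assumes cs: "cstar_algebra cs st" and S: "S \<subseteq> tracial_states cs st"
    and \<omega>: "free_ultrafilter \<omega>" and a: "a \<in> linfty"
  shows "0 \<le> unorm2 \<omega> st S a"
proof -
  obtain B where B: "\<And>n. norm (a n) \<le> B" using a unfolding linfty_def bounded_iff by auto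
  have "\<omega> \<noteq> bot" and ultra: "\<forall>P. eventually P \<omega> \<or> eventually (\<lambda>n. \<not> P n) \<omega>"
    using \<omega> unfolding free_ultrafilter_def by auto
  have "norm2 st S (a n) \<in> {0..B}" for n
    using norm2_bounds[OF cs S, of "a n"] B[of n] by auto
  then have "eventually (\<lambda>n. norm2 st S (a n) \<in> {0..B}) \<omega>" by simp
  then have "\<exists>L\<in>{0..B}. ((\<lambda>n. norm2 st S (a n)) \<longlongrightarrow> L) \<omega>"
    by (rule ultrafilter_tendsto_in_compact[OF compact_Icc \<open>\<omega> \<noteq> bot\<close> ultra])
  then obtain L where L: "L \<in> {0..B}" "((\<lambda>n. norm2 st S (a n)) \<longlongrightarrow> L) \<omega>" ..
  \<comment> \<open>Lim is a definite description, so without this limit unorm2 would be an unspecified value.\<close>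
  have "unorm2 \<omega> st S a = L" unfolding unorm2_def by (rule tendsto_Lim[OF \<open>\<omega> \<noteq> bot\<close> L(2)])
  then show ?thesis using L by simp
qed

lemma zero_in_I_ideal:
  assumes "cstar_algebra cs st" and "S \<subseteq> tracial_states cs st" and "free_ultrafilter \<omega>"
  shows "0 \<in> I_ideal \<omega> st S"
proof -
  have "norm2 st S 0 = 0" using norm2_bounds[OF assms(1,2), of 0] by simp
  moreover have "Lim \<omega> (\<lambda>n. 0::real) = 0"
    using assms(3) by (intro tendsto_Lim) (auto simp: free_ultrafilter_def)
  ultimately show ?thesis unfolding I_ideal_def unorm2_def linfty_def by simp
qed

lemma uminus_in_I_ideal:
  assumes "cstar_algebra cs st" and "j \<in> I_ideal \<omega> st S"
  shows "- j \<in> I_ideal \<omega> st S"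
  using assms linfty_uminus norm2_uminus[OF assms(1)]
  unfolding I_ideal_def unorm2_def by auto

theorem lemma3p13:
  fixes cs :: "complex \<Rightarrow> 'a::{real_normed_algebra,banach} \<Rightarrow> 'a"
    and st :: "'a \<Rightarrow> 'a"
    and \<omega> :: "nat filter"
    and F1 F2 :: "('a \<Rightarrow> complex) set"
  assumes "cstar_algebra cs st"
    and "separable_space TYPE('a)"
    and "algebraically_simple cs"
    and "tracial_states cs st \<noteq> {}"
    and "compact (tracial_states cs st)"
    and "free_ultrafilter \<omega>"
    and "compact F1" and "compact F2"
    and "F1 \<subseteq> F2" and "F2 \<subseteq> extreme_boundary (tracial_states cs st)"
    and "\<forall>x\<in>linfty. unorm2 \<omega> st F1 x =
           (INF j\<in>I_ideal \<omega> st F1. unorm2 \<omega> st F2 (\<lambda>n. x n + j n))"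
    and "\<forall>x\<in>linfty. unorm2 \<omega> st F2 x =
           (INF k\<in>I_ideal \<omega> st F2. unorm2 \<omega> st (tracial_states cs st) (\<lambda>n. x n + k n))"
  shows "\<forall>x\<in>linfty. unorm2 \<omega> st F1 x =
           (INF b\<in>I_ideal \<omega> st F1. unorm2 \<omega> st (tracial_states cs st) (\<lambda>n. x n + b n))"
proof -
  note cs = assms(1) and \<omega> = assms(6)
  let ?T = "tracial_states cs st"
  have F2: "F2 \<subseteq> ?T" using assms(10) unfolding extreme_boundary_def by auto
  with assms(9) have F1: "F1 \<subseteq> ?T" by blast
  have "\<forall>x\<in>linfty. unorm2 \<omega> st F1 x = (INF j\<in>I_ideal \<omega> st F1. unorm2 \<omega> st ?T (x + j))"
  proof (rule quotient_seminorm_trans)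
    show "0 \<in> I_ideal \<omega> st F1" "0 \<in> I_ideal \<omega> st F2"
      using zero_in_I_ideal[OF cs _ \<omega>] F1 F2 by auto
    show "0 \<le> unorm2 \<omega> st F2 x" "0 \<le> unorm2 \<omega> st ?T x" if "x \<in> linfty" for x
      using unorm2_nonneg[OF cs _ \<omega> that] F2 by auto
    show "\<forall>x\<in>linfty. unorm2 \<omega> st F1 x = (INF j\<in>I_ideal \<omega> st F1. unorm2 \<omega> st F2 (x + j))"
      "\<forall>x\<in>linfty. unorm2 \<omega> st F2 x = (INF k\<in>I_ideal \<omega> st F2. unorm2 \<omega> st ?T (x + k))"
      using assms(11,12) unfolding plus_fun_def .
  qed (use uminus_in_I_ideal[OF cs] linfty_add in \<open>auto simp: I_ideal_def\<close>)
  then show ?thesis unfolding plus_fun_def .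
qed

end
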